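(* Let $\Omega=[-1,1]$, let $\Pi_3(\mathbb{R}^1)$ be the space of real polynomials in one variable of degree at most $3$, and let $T:\mathbb{R}\to\mathbb{R}^3$, $T(x)=(x,x^2,x^3)$. Let $P:C[-1,1]\to\Pi_3(\mathbb{R}^1)$ be the interpolation projector with the regular nodes $-1,-\frac13,\frac13,1$, and let $S\subset\mathbb{R}^3$ be the tetrahedron with vertices $T(-1),T(-\frac13),T(\frac13),T(1)$. Then $$\xi(T(\Omega);S)=\frac{4}{2}\left(\|P\|_\Omega-1\right)+1=2\|P\|_\Omega-1.$$
   Context: For a nondegenerate simplex $S\subset\mathbb{R}^m$ and $\sigma>0$, $\sigma S$ denotes the image of $S$ under the homothety with center at the center of gravity of $S$ and ratio $\sigma$. For a closed bounded set $K\subset\mathbb{R}^m$, $\xi(K;S):=\min\{\sigma\ge 1: K\subset\sigma S\}$. The interpolation projector $P$ with distinct nodes $x^{(1)},\dots,x^{(4)}\in\Omega$ onto $\Pi_3(\mathbb{R}^1)$ is defined by $Pf\in\Pi_3(\mathbb{R}^1)$, $Pf(x^{(j)})=f(x^{(j)})$ for all $j$; $\|P\|_\Omega$ is its operator norm as a map $C(\Omega)\to C(\Omega)$ with the uniform norm. *)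

theory Defs
  imports "HOL-Analysis.Analysis" "HOL-Computational_Algebra.Polynomial"
begin

definition simplex_center :: "'a::real_vector list \<Rightarrow> 'a" where
  "simplex_center V = (1 / real (length V)) *\<^sub>R sum_list V"

definition simplex_of :: "'a::real_vector list \<Rightarrow> 'a set" where
  "simplex_of V = convex hull (set V)"

definition scaled_simplex :: "real \<Rightarrow> 'a::real_vector list \<Rightarrow> 'a set" where
  "scaled_simplex \<sigma> V =
     (\<lambda>y. simplex_center V + \<sigma> *\<^sub>R (y - simplex_center V)) ` simplex_of V"

definition xi :: "'a::real_vector set \<Rightarrow> 'a list \<Rightarrow> real" where
  "xi K V = Inf {\<sigma>. \<sigma> \<ge> 1 \<and> K \<subseteq> scaled_simplex \<sigma> V}"

definition interp_proj :: "nat \<Rightarrow> real list \<Rightarrow> (real \<Rightarrow> real) \<Rightarrow> real poly" where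
  "interp_proj n nodes f = (THE p. degree p \<le> n \<and> (\<forall>x\<in>set nodes. poly p x = f x))"

definition proj_norm :: "real set \<Rightarrow> nat \<Rightarrow> real list \<Rightarrow> real" where
  "proj_norm \<Omega> n nodes =
     Sup {(SUP x\<in>\<Omega>. \<bar>poly (interp_proj n nodes f) x\<bar>) | f.
            continuous_on \<Omega> f \<and> (\<forall>x\<in>\<Omega>. \<bar>f x\<bar> \<le> 1)}"

definition moment_curve3 :: "real \<Rightarrow> real^3" where
  "moment_curve3 x = vector [x, x^2, x^3]"

end

theory Submission
  imports Defs
begin

text \<open>The barycentric coordinates of the tetrahedron \<open>S\<close> are the affine functions on \<open>\<real>\<^sup>3\<close>
  that restrict to the Lagrange basis polynomials \<open>\<ell>\<^sub>j\<close> of the nodes along the moment curve \<open>T\<close>.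
  A point lies in \<open>\<sigma>S\<close> iff all its barycentric coordinates are at least \<open>(1 - \<sigma>)/4\<close>, hence
  \<open>\<xi>(T(\<Omega>); S) = 1 + 4m\<close> with \<open>m = max\<^sub>j max\<^sub>\<Omega> (-\<ell>\<^sub>j)\<close>. On the other hand \<open>\<parallel>P\<parallel>\<close> is the
  maximum of the Lebesgue function \<open>\<Sum>\<^sub>j \<bar>\<ell>\<^sub>j\<bar>\<close>, which is \<open>1\<close> plus twice the negative part of
  the \<open>\<ell>\<^sub>j\<close> because they sum to \<open>1\<close>. For the regular nodes \<open>m\<close> is attained by \<open>\<ell>\<^sub>1\<close> at
  \<open>x = (1 + 2\<surd>7)/9\<close>, the only negative basis polynomial there, and nowhere do the negative
  parts add up to more than \<open>m\<close>; so \<open>\<parallel>P\<parallel> = 1 + 2m\<close>.\<close>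

definition lagrange_basis :: "'a::field list \<Rightarrow> nat \<Rightarrow> 'a poly" where
  "lagrange_basis xs j =
     smult (inverse (\<Prod>i\<in>{..<length xs} - {j}. xs ! j - xs ! i))
       (\<Prod>i\<in>{..<length xs} - {j}. [:- (xs ! i), 1:])"

definition lagrange_interp :: "'a::field list \<Rightarrow> ('a \<Rightarrow> 'a) \<Rightarrow> 'a poly" where
  "lagrange_interp xs f = (\<Sum>j<length xs. smult (f (xs ! j)) (lagrange_basis xs j))"

definition lebesgue_function :: "'a::linordered_field list \<Rightarrow> 'a \<Rightarrow> 'a" where
  "lebesgue_function xs x = (\<Sum>j<length xs. \<bar>poly (lagrange_basis xs j) x\<bar>)"

lemma poly_lagrange_basis:
  "poly (lagrange_basis xs j) x =
     (\<Prod>i\<in>{..<length xs} - {j}. x - xs ! i) / (\<Prod>i\<in>{..<length xs} - {j}. xs ! j - xs ! i)"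
  by (simp add: lagrange_basis_def poly_prod field_simps)

lemma degree_lagrange_basis:
  assumes "j < length xs"
  shows "degree (lagrange_basis xs j) < length xs"
proof -
  have "degree (lagrange_basis xs j) \<le> (\<Sum>i\<in>{..<length xs} - {j}. degree [:- (xs ! i), 1:])"
    unfolding lagrange_basis_def
    using degree_prod_sum_le[of "{..<length xs} - {j}" "\<lambda>i. [:- (xs ! i), 1:]"]
    by (simp add: o_def)
  also have "\<dots> = length xs - 1" using assms by simp
  finally show ?thesis using assms by linarith
qed

lemma poly_lagrange_basis_nth:
  assumes "distinct xs" "j < length xs" "k < length xs"
  shows "poly (lagrange_basis xs j) (xs ! k) = (if k = j then 1 else 0)"
proof (cases "k = j")
  case True
  have "(\<Prod>i\<in>{..<length xs} - {j}. xs ! j - xs ! i) \<noteq> 0"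
    using assms by (simp add: nth_eq_iff_index_eq)
  then show ?thesis using True by (simp add: poly_lagrange_basis)
next
  case False
  then have "(\<Prod>i\<in>{..<length xs} - {j}. xs ! k - xs ! i) = 0"
    using assms by (intro prod_zero) auto
  then show ?thesis using False by (simp add: poly_lagrange_basis)
qed

lemma poly_lagrange_interp:
  "poly (lagrange_interp xs f) x = (\<Sum>j<length xs. f (xs ! j) * poly (lagrange_basis xs j) x)"
  by (simp add: lagrange_interp_def poly_sum)

lemma degree_lagrange_interp:
  assumes "xs \<noteq> []"
  shows "degree (lagrange_interp xs f) < length xs"
proof -
  have "degree (lagrange_interp xs f) \<le> length xs - 1"
    unfolding lagrange_interp_def
  proof (rule degree_sum_le)
    fix j assume "j \<in> {..<length xs}"
    then have "degree (lagrange_basis xs j) \<le> length xs - 1"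
      using degree_lagrange_basis[of j xs] by simp
    then show "degree (smult (f (xs ! j)) (lagrange_basis xs j)) \<le> length xs - 1"
      using degree_smult_le order.trans by blast
  qed simp
  then show ?thesis using assms by (cases xs) auto
qed

lemma poly_lagrange_interp_nth:
  assumes "distinct xs" "k < length xs"
  shows "poly (lagrange_interp xs f) (xs ! k) = f (xs ! k)"
  using assms by (simp add: poly_lagrange_interp poly_lagrange_basis_nth if_distrib cong: if_cong)

lemma lagrange_interp_poly:
  fixes q :: "'a::field poly"
  assumes "distinct xs" "degree q < length xs"
  shows "lagrange_interp xs (poly q) = q"
proof (rule poly_eqI_degree[where A = "set xs"])
  show "poly (lagrange_interp xs (poly q)) x = poly q x" if "x \<in> set xs" for x
    using that assms(1) by (auto simp: in_set_conv_nth poly_lagrange_interp_nth)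
  show "degree (lagrange_interp xs (poly q)) < card (set xs)"
    using assms degree_lagrange_interp[of xs] by (cases xs) (auto simp: distinct_card)
qed (use assms in \<open>simp add: distinct_card\<close>)

lemma sum_lagrange_basis_power:
  assumes "distinct xs" "k < length xs"
  shows "(\<Sum>j<length xs. (xs ! j) ^ k * poly (lagrange_basis xs j) x) = x ^ k"
  using arg_cong[OF lagrange_interp_poly[of xs "monom 1 k"], of "\<lambda>p. poly p x"] assms
  by (simp add: poly_lagrange_interp poly_monom degree_monom_eq)

lemma abs_poly_lagrange_interp_le:
  fixes xs :: "'a::linordered_field list"
  assumes "\<And>j. j < length xs \<Longrightarrow> \<bar>f (xs ! j)\<bar> \<le> 1"
  shows "\<bar>poly (lagrange_interp xs f) x\<bar> \<le> lebesgue_function xs x"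
proof -
  have "\<bar>poly (lagrange_interp xs f) x\<bar> \<le> (\<Sum>j<length xs. \<bar>f (xs ! j)\<bar> * \<bar>poly (lagrange_basis xs j) x\<bar>)"
    unfolding poly_lagrange_interp abs_mult[symmetric] by (rule sum_abs)
  also have "\<dots> \<le> lebesgue_function xs x"
    unfolding lebesgue_function_def
    by (intro sum_mono mult_left_le_one_le) (auto simp: assms)
  finally show ?thesis .
qed

lemma lebesgue_function_eq_neg_part:
  fixes xs :: "'a::linordered_field list"
  assumes "distinct xs" "xs \<noteq> []"
  shows "lebesgue_function xs x = 1 + 2 * (\<Sum>j<length xs. max 0 (- poly (lagrange_basis xs j) x))"
proof -
  have "\<bar>t\<bar> = t + 2 * max 0 (- t)" for t :: 'a
    by (simp add: abs_if max_def)
  then have "lebesgue_function xs x =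
      (\<Sum>j<length xs. poly (lagrange_basis xs j) x) + 2 * (\<Sum>j<length xs. max 0 (- poly (lagrange_basis xs j) x))"
    by (simp add: lebesgue_function_def sum.distrib sum_distrib_left)
  also have "(\<Sum>j<length xs. poly (lagrange_basis xs j) x) = 1"
    using sum_lagrange_basis_power[of xs 0 x] assms by simp
  finally show ?thesis .
qed

lemma interp_proj_eqI:
  assumes "degree p \<le> n" "\<forall>x\<in>set nodes. poly p x = f x" "n < card (set nodes)"
  shows "interp_proj n nodes f = p"
  unfolding interp_proj_def
proof (rule the_equality)
  fix q assume q: "degree q \<le> n \<and> (\<forall>x\<in>set nodes. poly q x = f x)"
  show "q = p"
    by (rule poly_eqI_degree[where A = "set nodes"]) (use assms q in auto)
qed (use assms in simp)

lemma interp_proj_eq_lagrange_interp: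
  assumes "distinct xs" "length xs = Suc n"
  shows "interp_proj n xs f = lagrange_interp xs f"
proof (rule interp_proj_eqI)
  show "degree (lagrange_interp xs f) \<le> n"
    using degree_lagrange_interp[of xs f] assms(2) by fastforce
  show "\<forall>x\<in>set xs. poly (lagrange_interp xs f) x = f x"
    using assms(1) by (auto simp: in_set_conv_nth poly_lagrange_interp_nth)
qed (use assms in \<open>simp add: distinct_card\<close>)

lemma proj_norm_eqI:
  assumes "\<And>f x. continuous_on \<Omega> f \<Longrightarrow> \<forall>x\<in>\<Omega>. \<bar>f x\<bar> \<le> 1 \<Longrightarrow> x \<in> \<Omega> \<Longrightarrow>
             \<bar>poly (interp_proj n nodes f) x\<bar> \<le> M"
    and "continuous_on \<Omega> f\<^sub>0" "\<forall>x\<in>\<Omega>. \<bar>f\<^sub>0 x\<bar> \<le> 1"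
    and "x\<^sub>0 \<in> \<Omega>" "\<bar>poly (interp_proj n nodes f\<^sub>0) x\<^sub>0\<bar> = M"
  shows "proj_norm \<Omega> n nodes = M"
  unfolding proj_norm_def
proof (rule cSup_eq_maximum)
  have "(SUP x\<in>\<Omega>. \<bar>poly (interp_proj n nodes f\<^sub>0) x\<bar>) = M"
  proof (rule antisym)
    show "(SUP x\<in>\<Omega>. \<bar>poly (interp_proj n nodes f\<^sub>0) x\<bar>) \<le> M"
      using assms by (intro cSUP_least) auto
    show "M \<le> (SUP x\<in>\<Omega>. \<bar>poly (interp_proj n nodes f\<^sub>0) x\<bar>)"
      using assms by (intro cSUP_upper2[of _ _ x\<^sub>0] bdd_aboveI2[of _ _ M]) auto
  qed
  then show "M \<in> {SUP x\<in>\<Omega>. \<bar>poly (interp_proj n nodes f) x\<bar> | f.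
                   continuous_on \<Omega> f \<and> (\<forall>x\<in>\<Omega>. \<bar>f x\<bar> \<le> 1)}"
    using assms(2,3) by blast
next
  fix y assume "y \<in> {SUP x\<in>\<Omega>. \<bar>poly (interp_proj n nodes f) x\<bar> | f.
                      continuous_on \<Omega> f \<and> (\<forall>x\<in>\<Omega>. \<bar>f x\<bar> \<le> 1)}"
  then show "y \<le> M"
    using assms by (auto intro!: cSUP_least)
qed

lemma simplex_center_eq_sum:
  "simplex_center V = (1 / real (length V)) *\<^sub>R (\<Sum>i<length V. V ! i)"
  by (simp add: simplex_center_def sum_list_sum_nth atLeast0LessThan)

lemma affine_combination_mem_scaled_simplex:
  fixes V :: "'a::real_vector list" and m :: real
  assumes "V \<noteq> []" "0 \<le> m" "(\<Sum>i<length V. w i) = 1" "\<And>i. i < length V \<Longrightarrow> - m \<le> w i"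
  shows "(\<Sum>i<length V. w i *\<^sub>R V ! i) \<in> scaled_simplex (1 + real (length V) * m) V"
proof -
  define N where "N = real (length V)"
  define \<sigma> where "\<sigma> = 1 + N * m"
  define c where "c = simplex_center V"
  define z where "z = (\<Sum>i<length V. w i *\<^sub>R V ! i)"
  define \<mu> where "\<mu> i = 1 / N + (w i - 1 / N) / \<sigma>" for i
  have N: "0 < N" using assms(1) by (simp add: N_def)
  have \<sigma>: "0 < \<sigma>" using N assms(2) by (simp add: \<sigma>_def add_pos_nonneg)
  have c: "c = (\<Sum>i<length V. (1 / N) *\<^sub>R V ! i)"
    by (simp add: c_def N_def simplex_center_eq_sum scaleR_sum_right)
  define y where "y = (\<Sum>i<length V. \<mu> i *\<^sub>R V ! i)"
  have "y = c + (1 / \<sigma>) *\<^sub>R (z - c)"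
    unfolding y_def c z_def \<mu>_def
    by (simp add: scaleR_sum_right sum.distrib scaleR_add_left diff_divide_distrib
        scaleR_diff_left scaleR_diff_right sum_subtractf mult.commute)
  then have "z = c + \<sigma> *\<^sub>R (y - c)"
    using \<sigma> by simp
  moreover have "y \<in> simplex_of V"
    unfolding simplex_of_def y_def
  proof (rule convex_sum)
    show "sum \<mu> {..<length V} = 1"
      using assms(3) N by (simp add: \<mu>_def sum.distrib N_def sum_divide_distrib[symmetric] sum_subtractf)
    show "0 \<le> \<mu> i" if "i \<in> {..<length V}" for i
    proof -
      have "- \<sigma> / N \<le> w i - 1 / N"
        using assms(4)[of i] that N by (simp add: \<sigma>_def diff_divide_distrib)
      then have "- 1 / N \<le> (w i - 1 / N) / \<sigma>"
        using \<sigma> N by (simp add: field_simps)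
      then show ?thesis by (simp add: \<mu>_def)
    qed
  qed (auto intro: hull_inc)
  ultimately show ?thesis
    unfolding scaled_simplex_def z_def \<sigma>_def N_def c_def by blast
qed

lemma inner_sum_list_right: "inner a (sum_list V) = (\<Sum>v\<leftarrow>V. inner a v)"
  by (induction V) (simp_all add: inner_add_right)

lemma scaled_simplex_affine_lower_bound:
  fixes V :: "'a::real_inner list"
  assumes "z \<in> scaled_simplex \<sigma> V" "0 \<le> \<sigma>" "V \<noteq> []" "\<forall>v\<in>set V. 0 \<le> inner a v + b"
  shows "(1 - \<sigma>) * (\<Sum>v\<leftarrow>V. inner a v + b) / length V \<le> inner a z + b"
proof -
  define c where "c = simplex_center V"
  obtain y where y: "y \<in> convex hull (set V)" and z: "z = c + \<sigma> *\<^sub>R (y - c)"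
    using assms(1) by (auto simp: scaled_simplex_def simplex_of_def c_def)
  have "convex hull (set V) \<subseteq> {y. - b \<le> inner a y}"
    using assms(4) by (intro hull_minimal convex_halfspace_ge) auto
  then have "0 \<le> inner a y + b" using y by auto
  have "inner a z + b = (1 - \<sigma>) * (inner a c + b) + \<sigma> * (inner a y + b)"
    by (simp add: z algebra_simps)
  also have "inner a c + b = (\<Sum>v\<leftarrow>V. inner a v + b) / length V"
    using assms(3) by (simp add: c_def simplex_center_def inner_sum_list_right sum_list_addf
        sum_list_triv field_simps)
  finally show ?thesis
    using \<open>0 \<le> inner a y + b\<close> assms(2) by simp
qed

lemma xi_eqI:
  assumes "1 \<le> s" "K \<subseteq> scaled_simplex s V"
    and "\<And>\<sigma>. 1 \<le> \<sigma> \<Longrightarrow> K \<subseteq> scaled_simplex \<sigma> V \<Longrightarrow> s \<le> \<sigma>"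
  shows "xi K V = s"
  unfolding xi_def by (rule cInf_eq_minimum) (use assms in auto)

lemma poly_eq_cubic:
  fixes p :: "'a::comm_semiring_1 poly"
  assumes "degree p \<le> 3"
  shows "poly p x = coeff p 0 + coeff p 1 * x + coeff p 2 * x ^ 2 + coeff p 3 * x ^ 3"
proof -
  have "poly p x = (\<Sum>i\<le>3. coeff p i * x ^ i)"
    unfolding poly_altdef[of p x]
    by (rule sum.mono_neutral_left) (use assms in \<open>auto simp: coeff_eq_0\<close>)
  then show ?thesis by (simp add: eval_nat_numeral)
qed

lemma poly_eq_inner_moment_curve3:
  assumes "degree p \<le> 3"
  shows "poly p x = inner (vector [coeff p 1, coeff p 2, coeff p 3]) (moment_curve3 x) + coeff p 0"
  using assms by (simp add: poly_eq_cubic inner_vec_def sum_3 moment_curve3_def)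

lemma moment_curve3_lagrange_sum:
  assumes "distinct xs" "4 \<le> length xs"
  shows "moment_curve3 x = (\<Sum>j<length xs. poly (lagrange_basis xs j) x *\<^sub>R moment_curve3 (xs ! j))"
proof -
  have "(\<Sum>j<length xs. (xs ! j) ^ k * poly (lagrange_basis xs j) x) = x ^ k" if "k \<le> 3" for k
    using that assms by (intro sum_lagrange_basis_power) auto
  from this[of 1] this[of 2] this[of 3] show ?thesis
    by (simp add: vec_eq_iff forall_3 moment_curve3_def mult.commute)
qed

lemma sum_lessThan_4:
  fixes f :: "nat \<Rightarrow> 'a::comm_monoid_add"
  shows "(\<Sum>j<4. f j) = f 0 + f 1 + f 2 + f 3"
  by (simp add: eval_nat_numeral)

definition regular_nodes :: "real list" where
  "regular_nodes = [-1, -1/3, 1/3, 1]"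

abbreviation reg_basis :: "nat \<Rightarrow> real poly" where
  "reg_basis \<equiv> lagrange_basis regular_nodes"

lemma distinct_regular_nodes: "distinct regular_nodes"
  by (simp add: regular_nodes_def)

lemma length_regular_nodes [simp]: "length regular_nodes = 4"
  by (simp add: regular_nodes_def)

lemma regular_nodes_not_Nil [simp]: "regular_nodes \<noteq> []"
  by (simp add: regular_nodes_def)

lemma regular_nodes_nth [simp]:
  "regular_nodes ! 0 = -1" "regular_nodes ! 1 = -1/3" "regular_nodes ! 2 = 1/3" "regular_nodes ! 3 = 1"
  by (simp_all add: regular_nodes_def)

lemma regular_nodes_in_interval: "j < 4 \<Longrightarrow> regular_nodes ! j \<in> {-1..1}"
  using nth_mem[of j regular_nodes] by (auto simp: regular_nodes_def)

lemma poly_reg_basis: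
  "poly (reg_basis 0) x = 9/16 * (x^2 - 1/9) * (1 - x)"
  "poly (reg_basis 1) x = 27/16 * (1 - x^2) * (1/3 - x)"
  "poly (reg_basis 2) x = 27/16 * (1 - x^2) * (x + 1/3)"
  "poly (reg_basis 3) x = 9/16 * (x^2 - 1/9) * (x + 1)"
proof -
  have "{..<4} - {0} = {1,2,3::nat}" "{..<4} - {1} = {0,2,3::nat}"
    "{..<4} - {2} = {0,1,3::nat}" "{..<4} - {3} = {0,1,2::nat}"
    by auto
  then show "poly (reg_basis 0) x = 9/16 * (x^2 - 1/9) * (1 - x)"
    "poly (reg_basis 1) x = 27/16 * (1 - x^2) * (1/3 - x)"
    "poly (reg_basis 2) x = 27/16 * (1 - x^2) * (x + 1/3)"
    "poly (reg_basis 3) x = 9/16 * (x^2 - 1/9) * (x + 1)"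
    unfolding poly_lagrange_basis length_regular_nodes
    by (simp_all add: regular_nodes_def field_simps power2_eq_square)
qed

lemma sum_reg_basis:
  "poly (reg_basis 0) x + poly (reg_basis 1) x + poly (reg_basis 2) x + poly (reg_basis 3) x = 1"
  using sum_lagrange_basis_power[OF distinct_regular_nodes, of 0 x]
  by (simp add: sum_lessThan_4)

text \<open>The minimiser of \<open>reg_basis 1\<close> on \<open>[-1, 1]\<close>: the root in \<open>[1/3, 1]\<close> of
  \<open>9 x\<^sup>2 - 2 x - 3\<close>, which is a multiple of its derivative.\<close>

definition x_crit :: real where
  "x_crit = (1 + 2 * sqrt 7) / 9"

definition m_crit :: real where
  "m_crit = - poly (reg_basis 1) x_crit"

lemma x_crit_bounds: "2/3 \<le> x_crit" "x_crit \<le> 1"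
proof -
  have "5/2 \<le> sqrt 7" by (rule real_le_rsqrt) (simp add: power2_eq_square)
  moreover have "sqrt 7 \<le> 4" by (rule real_le_lsqrt) simp_all
  ultimately show "2/3 \<le> x_crit" "x_crit \<le> 1" by (simp_all add: x_crit_def)
qed

lemma x_crit_root: "9 * x_crit ^ 2 = 2 * x_crit + 3"
  by (simp add: x_crit_def power2_eq_square field_simps)

lemma reg_basis_1_ge:
  assumes "-1 \<le> x"
  shows "- m_crit \<le> poly (reg_basis 1) x"
proof -
  have "poly (reg_basis 1) x + m_crit = 27/16 * (x - x_crit) ^ 2 * (x - 1/3 + 2 * x_crit)
          + 9/16 * (9 * x_crit ^ 2 - 2 * x_crit - 3) * (x - x_crit)"
    unfolding m_crit_def poly_reg_basis by (simp add: power2_eq_square field_simps)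
  also have "\<dots> = 27/16 * (x - x_crit) ^ 2 * (x - 1/3 + 2 * x_crit)"
    by (simp add: x_crit_root)
  also have "\<dots> \<ge> 0"
    using assms x_crit_bounds by (intro mult_nonneg_nonneg) auto
  finally show ?thesis by simp
qed

lemma reg_basis_2_ge:
  assumes "x \<le> 1"
  shows "- m_crit \<le> poly (reg_basis 2) x"
proof -
  have "poly (reg_basis 2) x = poly (reg_basis 1) (- x)"
    unfolding poly_reg_basis by simp
  then show ?thesis using reg_basis_1_ge[of "- x"] assms by simp
qed

lemma m_crit_ge: "5/16 \<le> m_crit"
  using reg_basis_1_ge[of "2/3"] unfolding poly_reg_basis by (simp add: power2_eq_square)

lemma reg_basis_0_ge:
  assumes "x \<in> {-1..1}"
  shows "- 1/8 \<le> poly (reg_basis 0) x"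
proof -
  have "(1/9 - x^2) * (1 - x) \<le> 1/9 * 2"
    using assms by (intro mult_mono) auto
  moreover have "poly (reg_basis 0) x = - 9/16 * ((1/9 - x^2) * (1 - x))"
    unfolding poly_reg_basis by (simp add: field_simps)
  ultimately show ?thesis by linarith
qed

lemma reg_basis_3_ge:
  assumes "x \<in> {-1..1}"
  shows "- 1/8 \<le> poly (reg_basis 3) x"
proof -
  have "poly (reg_basis 3) x = poly (reg_basis 0) (- x)"
    unfolding poly_reg_basis by simp
  then show ?thesis using reg_basis_0_ge[of "- x"] assms by simp
qed

lemma reg_basis_ge:
  assumes "x \<in> {-1..1}" "j < 4"
  shows "- m_crit \<le> poly (reg_basis j) x"
proof -
  have "j = 0 \<or> j = 1 \<or> j = 2 \<or> j = 3" using assms(2) by auto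
  then show ?thesis
    using assms(1) m_crit_ge reg_basis_0_ge reg_basis_1_ge reg_basis_2_ge reg_basis_3_ge
    by (elim disjE) force+
qed

lemma reg_basis_neg_part_le:
  assumes x: "x \<in> {-1..1}"
  shows "(\<Sum>j<4. max 0 (- poly (reg_basis j) x)) \<le> m_crit"
proof -
  let ?l = "\<lambda>j. poly (reg_basis j) x"
  have sq_ge: "1/9 \<le> x^2" if "1/3 \<le> \<bar>x\<bar>"
    using that abs_le_square_iff[of "1/3" x] by (simp add: power2_eq_square)
  have sq_le: "x^2 \<le> 1" using x abs_le_square_iff[of x 1] by (simp add: abs_le_iff)
  consider "1/3 \<le> x" | "x \<le> -1/3" | "\<bar>x\<bar> \<le> 1/3" by linarith
  then show ?thesis
  proof cases
    case 1
    then have "0 \<le> ?l 0" "0 \<le> ?l 2" "0 \<le> ?l 3"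
      using x sq_ge sq_le unfolding poly_reg_basis by (auto intro!: mult_nonneg_nonneg)
    then show ?thesis using reg_basis_1_ge[of x] m_crit_ge x by (simp add: sum_lessThan_4)
  next
    case 2
    then have "0 \<le> ?l 0" "0 \<le> ?l 1" "0 \<le> ?l 3"
      using x sq_ge sq_le unfolding poly_reg_basis by (auto intro!: mult_nonneg_nonneg)
    then show ?thesis using reg_basis_2_ge[of x] m_crit_ge x by (simp add: sum_lessThan_4)
  next
    case 3
    then have "x^2 \<le> 1/9"
      using abs_le_square_iff[of x "1/3"] by (simp add: power2_eq_square)
    then have "0 \<le> ?l 1" "0 \<le> ?l 2" "?l 0 \<le> 0" "?l 3 \<le> 0"
      using 3 x sq_le unfolding poly_reg_basis
      by (auto intro!: mult_nonneg_nonneg mult_nonpos_nonneg)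
    moreover have "?l 0 + ?l 3 = 9/8 * x^2 - 1/8"
      unfolding poly_reg_basis by (simp add: field_simps)
    then have "- 1/8 \<le> ?l 0 + ?l 3"
      using zero_le_power2[of x] by linarith
    ultimately show ?thesis using m_crit_ge by (simp add: sum_lessThan_4)
  qed
qed

lemma lebesgue_function_regular_le:
  assumes "x \<in> {-1..1}"
  shows "lebesgue_function regular_nodes x \<le> 1 + 2 * m_crit"
  using reg_basis_neg_part_le[OF assms]
  by (simp add: lebesgue_function_eq_neg_part distinct_regular_nodes)

lemma interp_proj_regular: "interp_proj 3 regular_nodes f = lagrange_interp regular_nodes f"
  by (rule interp_proj_eq_lagrange_interp) (simp_all add: distinct_regular_nodes)

text \<open>A continuous function bounded by 1 whose values \<open>1, -1, 1, 1\<close> at the nodes are the signs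
  of the basis polynomials at \<open>x_crit\<close>.\<close>

definition extremal_fun :: "real \<Rightarrow> real" where
  "extremal_fun x = min 1 (3/2 * \<bar>3 * x + 1\<bar> - 1)"

lemma poly_interp_extremal_fun: "poly (lagrange_interp regular_nodes extremal_fun) x_crit = 1 + 2 * m_crit"
proof -
  have "poly (lagrange_interp regular_nodes extremal_fun) x_crit =
          poly (reg_basis 0) x_crit - poly (reg_basis 1) x_crit + poly (reg_basis 2) x_crit
            + poly (reg_basis 3) x_crit"
    unfolding poly_lagrange_interp length_regular_nodes sum_lessThan_4 regular_nodes_nth
    by (simp add: extremal_fun_def)
  then show ?thesis using sum_reg_basis[of x_crit] by (simp add: m_crit_def)
qed

lemma proj_norm_regular: "proj_norm {-1..1} 3 regular_nodes = 1 + 2 * m_crit"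
proof (rule proj_norm_eqI)
  fix f :: "real \<Rightarrow> real" and x assume f: "\<forall>x\<in>{-1..1}. \<bar>f x\<bar> \<le> 1" and x: "x \<in> {-1..1::real}"
  have "\<bar>poly (lagrange_interp regular_nodes f) x\<bar> \<le> lebesgue_function regular_nodes x"
    using f regular_nodes_in_interval by (intro abs_poly_lagrange_interp_le) auto
  also have "\<dots> \<le> 1 + 2 * m_crit"
    using x by (rule lebesgue_function_regular_le)
  finally show "\<bar>poly (interp_proj 3 regular_nodes f) x\<bar> \<le> 1 + 2 * m_crit"
    by (simp add: interp_proj_regular)
next
  show "continuous_on {-1..1} extremal_fun"
    unfolding extremal_fun_def by (intro continuous_intros)
  show "\<forall>x\<in>{-1..1}. \<bar>extremal_fun x\<bar> \<le> 1"
    unfolding extremal_fun_def abs_le_iff min_def by (auto intro: order.trans[OF _ abs_ge_zero])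
  show "x_crit \<in> {-1..1}"
    using x_crit_bounds by simp
  show "\<bar>poly (interp_proj 3 regular_nodes extremal_fun) x_crit\<bar> = 1 + 2 * m_crit"
    using m_crit_ge by (simp add: interp_proj_regular poly_interp_extremal_fun)
qed

lemma xi_regular:
  "xi (moment_curve3 ` {-1..1}) (map moment_curve3 regular_nodes) = 1 + 4 * m_crit"
proof (rule xi_eqI)
  let ?V = "map moment_curve3 regular_nodes"
  show "1 \<le> 1 + 4 * m_crit" using m_crit_ge by simp
  show "moment_curve3 ` {-1..1} \<subseteq> scaled_simplex (1 + 4 * m_crit) ?V"
  proof clarify
    fix x :: real assume x: "x \<in> {-1..1}"
    have "moment_curve3 x =
            (\<Sum>j<length regular_nodes. poly (reg_basis j) x *\<^sub>R moment_curve3 (regular_nodes ! j))"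
      by (rule moment_curve3_lagrange_sum) (simp_all add: distinct_regular_nodes)
    also have "\<dots> = (\<Sum>j<length ?V. poly (reg_basis j) x *\<^sub>R ?V ! j)"
      by simp
    also have "\<dots> \<in> scaled_simplex (1 + real (length ?V) * m_crit) ?V"
    proof (rule affine_combination_mem_scaled_simplex)
      show "(\<Sum>j<length ?V. poly (reg_basis j) x) = 1"
        using sum_lagrange_basis_power[OF distinct_regular_nodes, of 0 x] by simp
    qed (use m_crit_ge reg_basis_ge[OF x] in auto)
    finally show "moment_curve3 x \<in> scaled_simplex (1 + 4 * m_crit) ?V" by simp
  qed
  fix \<sigma> assume \<sigma>: "1 \<le> \<sigma>" and sub: "moment_curve3 ` {-1..1} \<subseteq> scaled_simplex \<sigma> ?V"
  txt \<open>The barycentric coordinate of the second vertex: on the moment curve it is \<open>reg_basis 1\<close>.\<close>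
  define a :: "real^3" where "a = vector [coeff (reg_basis 1) 1, coeff (reg_basis 1) 2, coeff (reg_basis 1) 3]"
  define b where "b = coeff (reg_basis 1) 0"
  have coord: "inner a (moment_curve3 y) + b = poly (reg_basis 1) y" for y
    unfolding a_def b_def using degree_lagrange_basis[of 1 regular_nodes]
    by (intro poly_eq_inner_moment_curve3[symmetric]) simp
  have vertex: "inner a (?V ! j) + b = (if j = 1 then 1 else 0)" if "j < 4" for j
    using that coord poly_lagrange_basis_nth[OF distinct_regular_nodes, of 1 j] by simp
  have "(\<Sum>v\<leftarrow>?V. inner a v + b) = (\<Sum>j<4. inner a (?V ! j) + b)"
    by (simp add: sum_list_sum_nth atLeast0LessThan)
  also have "\<dots> = 1"
    using vertex[of 0] vertex[of 1] vertex[of 2] vertex[of 3] unfolding sum_lessThan_4 by simp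
  finally have "(\<Sum>v\<leftarrow>?V. inner a v + b) = 1" .
  moreover have "moment_curve3 x_crit \<in> scaled_simplex \<sigma> ?V"
    using sub x_crit_bounds by auto
  then have "(1 - \<sigma>) * (\<Sum>v\<leftarrow>?V. inner a v + b) / length ?V \<le> inner a (moment_curve3 x_crit) + b"
    using \<sigma> vertex by (intro scaled_simplex_affine_lower_bound) (auto simp: in_set_conv_nth)
  ultimately show "1 + 4 * m_crit \<le> \<sigma>"
    by (simp add: coord m_crit_def)
qed

theorem mainTheorem2:
  shows "xi (moment_curve3 ` {-1..1})
            [moment_curve3 (-1), moment_curve3 (-1/3), moment_curve3 (1/3), moment_curve3 1]
          = 4/2 * (proj_norm {-1..1} 3 [-1, -1/3, 1/3, 1] - 1) + 1
       \<and> 4/2 * (proj_norm {-1..1} 3 [-1, -1/3, 1/3, 1] - 1) + 1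
          = 2 * proj_norm {-1..1} 3 [-1, -1/3, 1/3, 1] - 1"
  using xi_regular proj_norm_regular by (simp add: regular_nodes_def)

end
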